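(* Let $X$ be a set, $F:\mathcal{P}(X)\to\mathcal{P}(X)$ an interior operator, and $\kappa$ a cardinal. Suppose that $(\mathbf{Fix}(F),\subseteq,\bigcup)$ has no basis indexed by a set of cardinality $\kappa$. Then there is no set $Y$ of cardinality less than $\kappa$ together with a relation $r\subseteq X\times Y$ such that $F=\langle r\rangle\circ[r^{\sim}]$.
   Context: An interior operator on $\mathcal{P}(X)$ is a map $F$ that is monotonic, contractive ($F(U)\subseteq U$), and satisfies $F(U)\subseteq F(F(U))$; $\mathbf{Fix}(F)=\{U\subseteq X\mid F(U)=U\}$, a complete sup-lattice under inclusion and unions. A basis of a complete sup-lattice $(L,\leq,\bigvee)$ is a family $(x_i)_{i\in I}$ of elements of $L$ (repetitions allowed) such that for every $y\in L$, $y=\bigvee\{x_i\mid x_i\leq y\}$; it is indexed by $I$. For $r\subseteq X\times Y$, $r^{\sim}=\{(y,x)\mid (x,y)\in r\}$. For $t\subseteq A\times B$, $\langle t\rangle,[t]:\mathcal{P}(B)\to\mathcal{P}(A)$ are $\langle t\rangle(V)=\{a\mid \exists b,\ (a,b)\in t\wedge b\in V\}$ and $[t](V)=\{a\mid \forall b,\ (a,b)\in t\Rightarrow b\in V\}$. *)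

theory Defs
  imports Main "HOL-Library.Equipollence"
begin

definition interior_operator :: "'a set \<Rightarrow> ('a set \<Rightarrow> 'a set) \<Rightarrow> bool" where
  "interior_operator X F \<longleftrightarrow>
     (\<forall>U. U \<subseteq> X \<longrightarrow> F U \<subseteq> X) \<and>
     (\<forall>U V. U \<subseteq> V \<and> V \<subseteq> X \<longrightarrow> F U \<subseteq> F V) \<and>
     (\<forall>U. U \<subseteq> X \<longrightarrow> F U \<subseteq> U) \<and>
     (\<forall>U. U \<subseteq> X \<longrightarrow> F U \<subseteq> F (F U))"

definition Fix :: "'a set \<Rightarrow> ('a set \<Rightarrow> 'a set) \<Rightarrow> 'a set set" where
  "Fix X F = {U. U \<subseteq> X \<and> F U = U}"

definition is_basis :: "'a set set \<Rightarrow> 'i set \<Rightarrow> ('i \<Rightarrow> 'a set) \<Rightarrow> bool" where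
  "is_basis L I b \<longleftrightarrow> (\<forall>i\<in>I. b i \<in> L) \<and>
     (\<forall>y\<in>L. y = \<Union>{b i | i. i \<in> I \<and> b i \<subseteq> y})"

definition diam :: "('a \<times> 'b) set \<Rightarrow> 'b set \<Rightarrow> 'a set" where
  "diam t V = {a. \<exists>b. (a, b) \<in> t \<and> b \<in> V}"

definition box :: "'a set \<Rightarrow> ('a \<times> 'b) set \<Rightarrow> 'b set \<Rightarrow> 'a set" where
  "box A t V = {a \<in> A. \<forall>b. (a, b) \<in> t \<longrightarrow> b \<in> V}"

end

theory Submission
  imports Defs
begin

text \<open>If F = <r> o [r~] with r a relation between X and Y, then F U is the union of
  those fibres r~{y} contained in U; the fibres are therefore fixed points and form a basis
  of Fix(F) indexed by Y. Padding this basis with copies of the empty fixed point reindexes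
  it by any set into which Y injects, in particular by a set of cardinality kappa.\<close>

lemma diam_box_converse_eq_Union_fibres:
  assumes "r \<subseteq> A \<times> Y"
  shows "diam r (box Y (converse r) U) = \<Union>{r\<inverse> `` {y} | y. y \<in> Y \<and> r\<inverse> `` {y} \<subseteq> U}"
  using assms unfolding diam_def box_def by blast

lemma is_basis_Fix_of_Union_representation:
  assumes F: "\<And>U. U \<subseteq> X \<Longrightarrow> F U = \<Union>{c y | y. y \<in> Y \<and> c y \<subseteq> U}"
    and c: "\<And>y. y \<in> Y \<Longrightarrow> c y \<subseteq> X"
  shows "is_basis (Fix X F) Y c"
  unfolding is_basis_def
proof (intro conjI ballI)
  fix y assume "y \<in> Y"
  then show "c y \<in> Fix X F"
    using F[OF c] c unfolding Fix_def by (intro CollectI conjI equalityI) blast+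
next
  fix V assume "V \<in> Fix X F"
  then show "V = \<Union>{c y | y. y \<in> Y \<and> c y \<subseteq> V}"
    using F unfolding Fix_def by auto
qed

lemma is_basis_reindex_lepoll:
  assumes "is_basis L Y c" and "Y \<lesssim> K" and empty: "{} \<in> L"
  shows "\<exists>b. is_basis L K b"
proof -
  from \<open>is_basis L Y c\<close> have c_in: "\<And>y. y \<in> Y \<Longrightarrow> c y \<in> L"
    and c_span: "\<And>V. V \<in> L \<Longrightarrow> V = \<Union>{c y | y. y \<in> Y \<and> c y \<subseteq> V}"
    unfolding is_basis_def by blast+
  from \<open>Y \<lesssim> K\<close> obtain g where g: "inj_on g Y" "g ` Y \<subseteq> K"
    unfolding lepoll_def by blast
  define b where "b k = (if k \<in> g ` Y then c (inv_into Y g k) else {})" for k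
  have b_g: "b (g y) = c y" if "y \<in> Y" for y
    using that g by (simp add: b_def)
  have "is_basis L K b"
    unfolding is_basis_def
  proof (intro conjI ballI)
    fix k assume "k \<in> K"
    show "b k \<in> L"
      using c_in empty inv_into_into[of k g Y] by (simp add: b_def)
  next
    fix V assume "V \<in> L"
    have "\<Union>{b i | i. i \<in> K \<and> b i \<subseteq> V} = \<Union>{c y | y. y \<in> Y \<and> c y \<subseteq> V}"
    proof (rule antisym)
      show "\<Union>{b i | i. i \<in> K \<and> b i \<subseteq> V} \<subseteq> \<Union>{c y | y. y \<in> Y \<and> c y \<subseteq> V}"
      proof
        fix x assume "x \<in> \<Union>{b i | i. i \<in> K \<and> b i \<subseteq> V}"
        then obtain i where i: "b i \<subseteq> V" "x \<in> b i" by blast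
        then obtain y where "y \<in> Y" "i = g y"
          by (auto simp: b_def split: if_splits)
        with i b_g show "x \<in> \<Union>{c y | y. y \<in> Y \<and> c y \<subseteq> V}" by auto
      qed
      show "\<Union>{c y | y. y \<in> Y \<and> c y \<subseteq> V} \<subseteq> \<Union>{b i | i. i \<in> K \<and> b i \<subseteq> V}"
      proof
        fix x assume "x \<in> \<Union>{c y | y. y \<in> Y \<and> c y \<subseteq> V}"
        then obtain y where "y \<in> Y" "c y \<subseteq> V" "x \<in> c y" by blast
        moreover have "g y \<in> K" using \<open>y \<in> Y\<close> g(2) by blast
        ultimately show "x \<in> \<Union>{b i | i. i \<in> K \<and> b i \<subseteq> V}"
          using b_g[of y] by blast
      qed
    qed
    with c_span[OF \<open>V \<in> L\<close>] show "V = \<Union>{b i | i. i \<in> K \<and> b i \<subseteq> V}"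
      by simp
  qed
  then show ?thesis by blast
qed

theorem lemma6:
  fixes X :: "'a set" and F :: "'a set \<Rightarrow> 'a set" and K :: "'k set"
  assumes "interior_operator X F"
    and "\<not> (\<exists>(I :: 'k set) (b :: 'k \<Rightarrow> 'a set). I \<approx> K \<and> is_basis (Fix X F) I b)"
  shows "\<not> (\<exists>(Y :: 'y set) (r :: ('a \<times> 'y) set).
            Y \<prec> K \<and> r \<subseteq> X \<times> Y \<and>
            (\<forall>U. U \<subseteq> X \<longrightarrow> F U = diam r (box Y (converse r) U)))"
proof
  assume "\<exists>(Y :: 'y set) (r :: ('a \<times> 'y) set).
            Y \<prec> K \<and> r \<subseteq> X \<times> Y \<and>
            (\<forall>U. U \<subseteq> X \<longrightarrow> F U = diam r (box Y (converse r) U))"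
  then obtain Y :: "'y set" and r where "Y \<prec> K" and r: "r \<subseteq> X \<times> Y"
    and F: "\<And>U. U \<subseteq> X \<Longrightarrow> F U = diam r (box Y (converse r) U)"
    by blast
  have F_Union: "F U = \<Union>{r\<inverse> `` {y} | y. y \<in> Y \<and> r\<inverse> `` {y} \<subseteq> U}" if "U \<subseteq> X" for U
    using F[OF that] diam_box_converse_eq_Union_fibres[OF r] by simp
  have "is_basis (Fix X F) Y (\<lambda>y. r\<inverse> `` {y})"
    using r by (intro is_basis_Fix_of_Union_representation F_Union) auto
  moreover have "{} \<in> Fix X F"
    using F_Union[of "{}"] unfolding Fix_def by auto
  ultimately obtain b where "is_basis (Fix X F) K b"
    using is_basis_reindex_lepoll lesspoll_imp_lepoll[OF \<open>Y \<prec> K\<close>] by blast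
  with assms(2) eqpoll_refl show False by blast
qed

end
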